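(* For each user $n$, both $-\lim_{\rho\to\infty}\frac{\log\Pr(\rho (Y^{(n)})^2<\tilde\gamma_{OMA})}{\log\rho}$ and $-\lim_{\rho\to\infty}\frac{\log\Pr(\rho (Y^{(n)}_c)^2<\tilde\gamma_{OMA})}{\log\rho}$ exist and equal $m_sK$ (the OMA diversity order is $m_sK$ for both $b$-bit discrete, $b\ge2$, and continuous phase shifts).
   Context: Fix integers $N\ge1$, $K\ge1$, $b\ge2$ and a real $\beta\in(0,1]$. Let $m_G,m_g\ge 1/2$ with $m_G\neq m_g$; put $m_s=\min\{m_G,m_g\}$. For $n=1,\dots,N$ and $k=1,\dots,K$ let $G_k^n,g_k^n$ be mutually independent complex random variables such that $|G_k^n|$ has the Nakagami density $f(x)=\frac{2m^m}{\Gamma(m)}x^{2m-1}e^{-mx^2}$ ($x\ge0$) with $m=m_G$, and $|g_k^n|$ has this density with $m=m_g$. Let $\Delta=2\pi/2^b$. For each $n$ fix a constant $\tilde\theta_n\in[0,2\pi)$ and set $\bar\theta_k^n=\tilde\theta_n-\arg(G_k^ng_k^n)$, $\hat\theta_k^n=\Delta(\lfloor\bar\theta_k^n/\Delta\rfloor+\tfrac12)$, $\epsilon_k^n=\hat\theta_k^n-\bar\theta_k^n$. Define $Y^{(n)}=\beta\big|\sum_{k=1}^K|G_k^n||g_k^n|e^{j\epsilon_k^n}\big|$ and $Y_c^{(n)}=\beta\sum_{k=1}^K|G_k^n||g_k^n|$. $\tilde\gamma_{OMA}=2^{N\tilde R}-1$ for a target rate $\tilde R>0$; $\rho>0$ is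 the transmit SNR. *)

theory Defs
  imports "HOL-Probability.Probability"
begin

definition nakagami_pdf :: "real \<Rightarrow> real \<Rightarrow> real" where
  "nakagami_pdf m x =
     (if 0 \<le> x then 2 * m powr m / Gamma m * x powr (2 * m - 1) * exp (- m * x\<^sup>2) else 0)"

definition qstep :: "nat \<Rightarrow> real" where
  "qstep b = 2 * pi / 2 ^ b"

definition theta_bar :: "(nat \<Rightarrow> real) \<Rightarrow> (nat \<Rightarrow> nat \<Rightarrow> 'a \<Rightarrow> complex)
    \<Rightarrow> (nat \<Rightarrow> nat \<Rightarrow> 'a \<Rightarrow> complex) \<Rightarrow> nat \<Rightarrow> nat \<Rightarrow> 'a \<Rightarrow> real" where
  "theta_bar th G g n k \<omega> = th n - Arg (G n k \<omega> * g n k \<omega>)"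

definition theta_hat :: "nat \<Rightarrow> (nat \<Rightarrow> real) \<Rightarrow> (nat \<Rightarrow> nat \<Rightarrow> 'a \<Rightarrow> complex)
    \<Rightarrow> (nat \<Rightarrow> nat \<Rightarrow> 'a \<Rightarrow> complex) \<Rightarrow> nat \<Rightarrow> nat \<Rightarrow> 'a \<Rightarrow> real" where
  "theta_hat b th G g n k \<omega> =
     qstep b * (of_int \<lfloor>theta_bar th G g n k \<omega> / qstep b\<rfloor> + 1 / 2)"

definition phase_err :: "nat \<Rightarrow> (nat \<Rightarrow> real) \<Rightarrow> (nat \<Rightarrow> nat \<Rightarrow> 'a \<Rightarrow> complex)
    \<Rightarrow> (nat \<Rightarrow> nat \<Rightarrow> 'a \<Rightarrow> complex) \<Rightarrow> nat \<Rightarrow> nat \<Rightarrow> 'a \<Rightarrow> real" where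
  "phase_err b th G g n k \<omega> = theta_hat b th G g n k \<omega> - theta_bar th G g n k \<omega>"

definition Y_disc :: "real \<Rightarrow> nat \<Rightarrow> nat \<Rightarrow> (nat \<Rightarrow> real) \<Rightarrow> (nat \<Rightarrow> nat \<Rightarrow> 'a \<Rightarrow> complex)
    \<Rightarrow> (nat \<Rightarrow> nat \<Rightarrow> 'a \<Rightarrow> complex) \<Rightarrow> nat \<Rightarrow> 'a \<Rightarrow> real" where
  "Y_disc \<beta> K b th G g n \<omega> =
     \<beta> * cmod (\<Sum>k\<in>{1..K}. complex_of_real (cmod (G n k \<omega>) * cmod (g n k \<omega>))
                            * cis (phase_err b th G g n k \<omega>))"

definition Y_cont :: "real \<Rightarrow> nat \<Rightarrow> (nat \<Rightarrow> nat \<Rightarrow> 'a \<Rightarrow> complex)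
    \<Rightarrow> (nat \<Rightarrow> nat \<Rightarrow> 'a \<Rightarrow> complex) \<Rightarrow> nat \<Rightarrow> 'a \<Rightarrow> real" where
  "Y_cont \<beta> K G g n \<omega> = \<beta> * (\<Sum>k\<in>{1..K}. cmod (G n k \<omega>) * cmod (g n k \<omega>))"

definition gamma_OMA :: "nat \<Rightarrow> real \<Rightarrow> real" where
  "gamma_OMA N R = 2 powr (real N * R) - 1"

end

theory Submission
  imports Defs
begin

text \<open>
  The continuous outage event \<rho> Y_c^2 < \<gamma> says that S = \<Sum>_k |G_k| |g_k| lies below
  sqrt (\<gamma> / (\<beta>^2 \<rho>)), so the diversity order is half the small-ball exponent of S.
  A Nakagami-m amplitude has P(|G| < s) \<asymp> s^(2m) near 0. For a single product, the event
  |G| |g| < t is covered by the dyadic cells 2^-j \<le> |g| < 2^(1-j), |G| < t 2^j; with the smaller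
  parameter on the side of |G| the resulting series is geometric, so P(|G| |g| < t) \<asymp> t^(2 m_s),
  and independence of the K pairs gives P(S < t) \<asymp> t^(2 m_s K). With b \<ge> 2 bits every
  quantisation error is at most \<pi>/4, hence Y_c / sqrt 2 \<le> Y \<le> Y_c: the discrete outage event
  lies between two continuous ones whose thresholds differ by the factor 2, which leaves the
  exponent unchanged.
\<close>

section \<open>Small-ball behaviour of Nakagami amplitudes\<close>

lemma nakagami_pdf_le:
  assumes "m \<ge> 1/2" "0 \<le> x" "x \<le> t"
  shows "nakagami_pdf m x \<le> 2 * m powr m / Gamma m * t powr (2 * m - 1)"
proof -
  define A where "A = 2 * m powr m / Gamma m"
  have A: "A > 0"
    unfolding A_def using assms(1) Gamma_real_pos[of m] by simp
  have "nakagami_pdf m x = A * x powr (2 * m - 1) * exp (- m * x\<^sup>2)"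
    using assms(2) unfolding nakagami_pdf_def A_def by simp
  also have "\<dots> \<le> A * x powr (2 * m - 1) * 1"
    using A assms by (intro mult_left_mono) auto
  also have "\<dots> \<le> A * t powr (2 * m - 1)"
    using A assms by (auto intro!: mult_left_mono powr_mono2)
  finally show ?thesis
    unfolding A_def .
qed

lemma nakagami_pdf_ge:
  assumes "m \<ge> 1/2" "0 \<le> s" "s \<le> x" "x \<le> 1"
  shows "2 * m powr m / Gamma m * s powr (2 * m - 1) * exp (- m) \<le> nakagami_pdf m x"
proof -
  define A where "A = 2 * m powr m / Gamma m"
  have A: "A > 0"
    unfolding A_def using assms(1) Gamma_real_pos[of m] by simp
  have "exp (- m) \<le> exp (- m * x\<^sup>2)"
    using assms power_le_one[of x 2] by (simp add: mult_le_cancel_left1)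
  moreover have "A * s powr (2 * m - 1) \<le> A * x powr (2 * m - 1)"
    using A assms by (intro mult_left_mono powr_mono2) auto
  ultimately have "A * s powr (2 * m - 1) * exp (- m) \<le> A * x powr (2 * m - 1) * exp (- m * x\<^sup>2)"
    using A by (intro mult_mono) auto
  also have "\<dots> = nakagami_pdf m x"
    using assms unfolding nakagami_pdf_def A_def by simp
  finally show ?thesis
    unfolding A_def .
qed

context prob_space
begin

lemma nakagami_small_ball_upper:
  assumes X: "distributed M lborel X (\<lambda>x. ennreal (nakagami_pdf m x))"
    and m: "m \<ge> 1/2" and t: "t \<ge> 0"
  shows "prob {\<omega> \<in> space M. X \<omega> < t} \<le> 2 * m powr m / Gamma m * t powr (2 * m)"
proof -
  define A where "A = 2 * m powr m / Gamma m"
  have A: "A > 0"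
    unfolding A_def using m Gamma_real_pos[of m] by simp
  have "emeasure M {\<omega> \<in> space M. X \<omega> < t}
      = (\<integral>\<^sup>+x. ennreal (nakagami_pdf m x) * indicator {..<t} x \<partial>lborel)"
    using distributed_emeasure[OF X, of "{..<t}"] by (simp add: vimage_def Int_def conj_commute)
  also have "\<dots> \<le> (\<integral>\<^sup>+x. ennreal (A * t powr (2 * m - 1)) * indicator {0..t} x \<partial>lborel)"
    using nakagami_pdf_le[OF m] unfolding A_def
    by (intro nn_integral_mono) (auto simp: indicator_def nakagami_pdf_def intro: ennreal_leI)
  also have "\<dots> = ennreal (A * t powr (2 * m - 1) * t)"
    using A t by (simp add: nn_integral_cmult_indicator ennreal_mult')
  also have "A * t powr (2 * m - 1) * t = A * t powr (2 * m)"
    using t by (cases "t = 0") (auto simp: powr_diff)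
  finally have "ennreal (prob {\<omega> \<in> space M. X \<omega> < t}) \<le> ennreal (A * t powr (2 * m))"
    by (simp add: emeasure_eq_measure)
  moreover have "0 \<le> A * t powr (2 * m)"
    using A by simp
  ultimately show ?thesis
    unfolding A_def by (simp only: ennreal_le_iff)
qed

lemma nakagami_small_ball_lower:
  assumes X: "distributed M lborel X (\<lambda>x. ennreal (nakagami_pdf m x))"
    and m: "m \<ge> 1/2" and t: "0 < t" "t \<le> 1"
  shows "2 * m powr m / Gamma m * exp (- m) / 2 powr (2 * m) * t powr (2 * m)
           \<le> prob {\<omega> \<in> space M. X \<omega> < t}"
proof -
  define A where "A = 2 * m powr m / Gamma m"
  define c where "c = A * (t/2) powr (2 * m - 1) * exp (- m)"
  have "c \<ge> 0"
    unfolding c_def A_def using m Gamma_real_pos[of m] by simp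
  have "ennreal (A * exp (- m) / 2 powr (2 * m) * t powr (2 * m)) = ennreal (c * (t/2))"
    using t unfolding c_def by (simp add: powr_diff powr_divide field_simps)
  also have "\<dots> = (\<integral>\<^sup>+x. ennreal c * indicator {t/2..t} x \<partial>lborel)"
    using \<open>c \<ge> 0\<close> t by (simp add: nn_integral_cmult_indicator ennreal_mult'[symmetric])
  also have "\<dots> \<le> (\<integral>\<^sup>+x. ennreal (nakagami_pdf m x) * indicator {..<t} x \<partial>lborel)"
  proof (rule nn_integral_mono_AE)
    show "AE x in lborel. ennreal c * indicator {t/2..t} x
        \<le> ennreal (nakagami_pdf m x) * indicator {..<t} x"
      using AE_lborel_singleton[of t]
    proof (rule AE_mp, intro AE_I2 impI)
      fix x :: real
      assume "x \<noteq> t"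
      then show "ennreal c * indicator {t/2..t} x \<le> ennreal (nakagami_pdf m x) * indicator {..<t} x"
        using nakagami_pdf_ge[OF m, of "t/2" x] t
        unfolding c_def A_def by (auto simp: indicator_def intro: ennreal_leI)
    qed
  qed
  also have "\<dots> = ennreal (prob {\<omega> \<in> space M. X \<omega> < t})"
    using distributed_emeasure[OF X, of "{..<t}"]
    by (simp add: vimage_def Int_def conj_commute emeasure_eq_measure)
  finally show ?thesis
    unfolding A_def by (simp add: ennreal_le_iff)
qed

end

section \<open>Sums of products of independent amplitudes\<close>

text \<open>
  For 0 < j \<le> J, cell j collects 2^-j \<le> y < 2^(1-j), where x y < t forces x < t 2^j;
  cell 0 takes y \<ge> 1 (then x < t) and cell J + 1 the remaining y < 2^-J.
\<close>

definition dyadic_x_cell :: "real \<Rightarrow> nat \<Rightarrow> nat \<Rightarrow> real set" where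
  "dyadic_x_cell t J j = (if j = Suc J then UNIV else {..<t * 2 ^ j})"

definition dyadic_y_cell :: "nat \<Rightarrow> nat \<Rightarrow> real set" where
  "dyadic_y_cell J j =
     (if j = 0 then UNIV else if j = Suc J then {..<(1/2) ^ J} else {..<2 * (1/2) ^ j})"

lemma dyadic_cells_cover:
  fixes x y t :: real
  assumes "x \<ge> 0" "y \<ge> 0" "x * y < t"
  shows "\<exists>j \<in> {0..Suc J}. x \<in> dyadic_x_cell t J j \<and> y \<in> dyadic_y_cell J j"
proof -
  consider "y \<ge> 1" | "y < (1/2) ^ J" | "(1/2) ^ J \<le> y" "y < 1"
    by linarith
  then show ?thesis
  proof cases
    case 1
    then have "x \<le> x * y"
      using assms(1) by (simp add: mult_le_cancel_left1)
    then have "x < t"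
      using assms(3) by linarith
    then show ?thesis
      by (intro bexI[of _ 0]) (auto simp: dyadic_x_cell_def dyadic_y_cell_def)
  next
    case 2
    then show ?thesis
      by (intro bexI[of _ "Suc J"]) (auto simp: dyadic_x_cell_def dyadic_y_cell_def)
  next
    case 3
    obtain j where j: "\<not> (1/2) ^ j \<le> y" "(1/2) ^ Suc j \<le> y"
      using exists_least_lemma[of "\<lambda>j. (1/2::real) ^ j \<le> y"] 3 by auto
    have "j < J"
    proof (rule ccontr)
      assume "\<not> j < J"
      then have "(1/2::real) ^ j \<le> (1/2) ^ J"
        by (intro power_decreasing) auto
      then show False
        using j(1) 3(1) by linarith
    qed
    have "x * (1/2) ^ Suc j \<le> x * y"
      using j(2) assms(1) by (rule mult_left_mono)
    then have "x / 2 ^ Suc j < t"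
      using assms(3) by (simp add: power_one_over)
    then have "x < t * 2 ^ Suc j"
      by (simp add: pos_divide_less_eq)
    then show ?thesis
      using \<open>j < J\<close> j(1)
      by (intro bexI[of _ "Suc j"]) (auto simp: dyadic_x_cell_def dyadic_y_cell_def)
  qed
qed

context prob_space
begin

lemma dyadic_cell_prob_le:
  assumes XU: "\<And>s. s \<ge> 0 \<Longrightarrow> prob {\<omega> \<in> space M. X \<omega> < s} \<le> A * s powr a"
    and YU: "\<And>s. s \<ge> 0 \<Longrightarrow> prob {\<omega> \<in> space M. Y \<omega> < s} \<le> A * s powr c"
    and a: "0 \<le> c" "a \<le> c" and A: "A > 0"
    and t: "0 < t" "t \<le> 1" and J: "(1/2) ^ J < t" and j: "j \<le> Suc J"
  shows "prob {\<omega> \<in> space M. X \<omega> \<in> dyadic_x_cell t J j} * prob {\<omega> \<in> space M. Y \<omega> \<in> dyadic_y_cell J j}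
         \<le> (if j = 0 then A * t powr a else 0) + (if j = Suc J then A * t powr a else 0)
            + A\<^sup>2 * 2 powr c * t powr a * (2 powr (a - c)) ^ j"
    (is "?p \<le> ?first + ?last + ?middle")
proof -
  have nonneg: "0 \<le> ?middle" "0 \<le> A * t powr a"
    using A by auto
  consider "j = 0" | "j = Suc J" | "0 < j" "j < Suc J"
    using j by linarith
  then show ?thesis
  proof cases
    case 1
    then have "?p \<le> A * t powr a"
      using XU[of t] t by (simp add: dyadic_x_cell_def dyadic_y_cell_def prob_space)
    then show ?thesis
      using 1 by (intro add_increasing2[OF nonneg(1)]) simp
  next
    case 2
    have "prob {\<omega> \<in> space M. Y \<omega> < (1/2) ^ J} \<le> A * ((1/2) ^ J) powr c"
      by (rule YU) simp
    also have "\<dots> \<le> A * t powr a"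
      using A a J t powr_mono2[of c "(1/2) ^ J" t] powr_mono'[of a c t]
      by (intro mult_left_mono) (auto simp del: power_one_over)
    finally have "?p \<le> A * t powr a"
      using 2 by (simp add: dyadic_x_cell_def dyadic_y_cell_def prob_space)
    then show ?thesis
      using 2 by (intro add_increasing2[OF nonneg(1)]) simp
  next
    case 3
    have "?p \<le> (A * (t * 2 ^ j) powr a) * (A * (2 * (1/2) ^ j) powr c)"
      using 3 t A unfolding dyadic_x_cell_def dyadic_y_cell_def
      by (auto intro!: mult_mono XU YU)
    also have "\<dots> = ?middle"
    proof -
      have "(2 * (1/2::real) ^ j) = 2 powr (1 - real j)"
        by (simp add: powr_diff power_one_over powr_realpow)
      then show ?thesis
        using t by (simp add: powr_mult powr_realpow[symmetric] powr_powr powr_power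
            powr_add[symmetric] power2_eq_square algebra_simps)
    qed
    finally show ?thesis
      using 3 nonneg by simp
  qed
qed

lemma dyadic_cells_prob_sum_le:
  assumes XU: "\<And>s. s \<ge> 0 \<Longrightarrow> prob {\<omega> \<in> space M. X \<omega> < s} \<le> A * s powr a"
    and YU: "\<And>s. s \<ge> 0 \<Longrightarrow> prob {\<omega> \<in> space M. Y \<omega> < s} \<le> A * s powr c"
    and a: "0 < a" "a < c" and A: "A > 0"
    and t: "0 < t" "t \<le> 1" and J: "(1/2) ^ J < t"
  shows "(\<Sum>j\<in>{0..Suc J}. prob {\<omega> \<in> space M. X \<omega> \<in> dyadic_x_cell t J j}
                         * prob {\<omega> \<in> space M. Y \<omega> \<in> dyadic_y_cell J j})
         \<le> (2 * A + A\<^sup>2 * 2 powr c / (1 - 2 powr (a - c))) * t powr a"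
proof -
  define r where "r = (2::real) powr (a - c)"
  have "r < 2 powr 0"
    unfolding r_def using a by (intro powr_less_mono) auto
  then have r: "0 < r" "r < 1"
    by (auto simp: r_def)
  have geometric: "(\<Sum>j\<in>{0..Suc J}. r ^ j) \<le> 1 / (1 - r)"
  proof -
    have "(\<Sum>j\<in>{0..Suc J}. r ^ j) = (\<Sum>j<Suc (Suc J). r ^ j)"
      by (rule sum.cong) auto
    also have "\<dots> = (1 - r ^ Suc (Suc J)) / (1 - r)"
      unfolding sum_gp_strict using r by simp
    also have "\<dots> \<le> 1 / (1 - r)"
      using r by (intro divide_right_mono) auto
    finally show ?thesis .
  qed
  have "(\<Sum>j\<in>{0..Suc J}. prob {\<omega> \<in> space M. X \<omega> \<in> dyadic_x_cell t J j}
                         * prob {\<omega> \<in> space M. Y \<omega> \<in> dyadic_y_cell J j})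
      \<le> (\<Sum>j\<in>{0..Suc J}. (if j = 0 then A * t powr a else 0) + (if j = Suc J then A * t powr a else 0)
                             + A\<^sup>2 * 2 powr c * t powr a * r ^ j)"
    unfolding r_def using XU YU a A t J by (intro sum_mono dyadic_cell_prob_le) auto
  also have "\<dots> = A * t powr a + A * t powr a + A\<^sup>2 * 2 powr c * t powr a * (\<Sum>j\<in>{0..Suc J}. r ^ j)"
    unfolding sum.distrib sum_distrib_left[symmetric] by simp
  also have "\<dots> \<le> A * t powr a + A * t powr a + A\<^sup>2 * 2 powr c * t powr a * (1 / (1 - r))"
    using geometric A by (intro add_left_mono mult_left_mono) auto
  also have "\<dots> = (2 * A + A\<^sup>2 * 2 powr c / (1 - 2 powr (a - c))) * t powr a"
    unfolding r_def by (simp add: algebra_simps)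
  finally show ?thesis .
qed

end

text \<open>
  Independence of the 2 |I| variables enters only through the factorisation of
  rectangle probabilities.
\<close>

locale indep_pairs = prob_space M
  for M :: "'a measure" and X Y :: "'i \<Rightarrow> 'a \<Rightarrow> real" and I :: "'i set" +
  assumes finite_index: "finite I" and index_nonempty: "I \<noteq> {}"
    and measurable_X: "\<And>i. i \<in> I \<Longrightarrow> X i \<in> borel_measurable M"
    and measurable_Y: "\<And>i. i \<in> I \<Longrightarrow> Y i \<in> borel_measurable M"
    and nonneg_X: "\<And>i \<omega>. i \<in> I \<Longrightarrow> \<omega> \<in> space M \<Longrightarrow> 0 \<le> X i \<omega>"
    and nonneg_Y: "\<And>i \<omega>. i \<in> I \<Longrightarrow> \<omega> \<in> space M \<Longrightarrow> 0 \<le> Y i \<omega>"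
    and prob_rectangles: "\<And>U V. (\<And>i. U i \<in> sets borel) \<Longrightarrow> (\<And>i. V i \<in> sets borel) \<Longrightarrow>
      prob (\<Inter>i\<in>I. {\<omega> \<in> space M. X i \<omega> \<in> U i \<and> Y i \<omega> \<in> V i})
      = (\<Prod>i\<in>I. prob {\<omega> \<in> space M. X i \<omega> \<in> U i} * prob {\<omega> \<in> space M. Y i \<omega> \<in> V i})"
begin

lemma swap: "indep_pairs M Y X I"
  using prob_rectangles finite_index index_nonempty measurable_X measurable_Y nonneg_X nonneg_Y
  by unfold_locales (simp_all add: conj_commute mult.commute)

lemma sets_sum_prod_less: "{\<omega> \<in> space M. (\<Sum>i\<in>I. X i \<omega> * Y i \<omega>) < t} \<in> sets M"
proof -
  have "(\<lambda>\<omega>. \<Sum>i\<in>I. X i \<omega> * Y i \<omega>) \<in> borel_measurable M"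
    using measurable_X measurable_Y by measurable
  then show ?thesis
    by measurable
qed

lemma small_rectangles_subset_sum_prod_less:
  "(\<Inter>i\<in>I. {\<omega> \<in> space M. X i \<omega> \<in> {..<t / card I} \<and> Y i \<omega> \<in> {..<1}})
   \<subseteq> {\<omega> \<in> space M. (\<Sum>i\<in>I. X i \<omega> * Y i \<omega>) < t}"
proof safe
  fix \<omega>
  assume \<omega>: "\<omega> \<in> (\<Inter>i\<in>I. {\<omega> \<in> space M. X i \<omega> \<in> {..<t / card I} \<and> Y i \<omega> \<in> {..<1}})"
  then show "\<omega> \<in> space M"
    using index_nonempty by auto
  have "X i \<omega> * Y i \<omega> < t / card I" if "i \<in> I" for i
  proof -
    have "X i \<omega> < t / card I" "Y i \<omega> < 1"
      using \<omega> that by auto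
    moreover have "X i \<omega> * Y i \<omega> \<le> X i \<omega>"
      using nonneg_X[OF that \<open>\<omega> \<in> space M\<close>] nonneg_Y[OF that \<open>\<omega> \<in> space M\<close>] \<open>Y i \<omega> < 1\<close>
      by (simp add: mult_left_le)
    ultimately show ?thesis
      by linarith
  qed
  then have "(\<Sum>i\<in>I. X i \<omega> * Y i \<omega>) < (\<Sum>i\<in>I. t / card I)"
    using finite_index index_nonempty by (intro sum_strict_mono) auto
  then show "(\<Sum>i\<in>I. X i \<omega> * Y i \<omega>) < t"
    using finite_index index_nonempty by simp
qed

lemma small_ball_lower:
  assumes XL: "\<And>i s. i \<in> I \<Longrightarrow> 0 < s \<Longrightarrow> s \<le> 1 \<Longrightarrow> B * s powr a \<le> prob {\<omega> \<in> space M. X i \<omega> < s}"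
    and YL: "\<And>i. i \<in> I \<Longrightarrow> B \<le> prob {\<omega> \<in> space M. Y i \<omega> < 1}"
    and B: "B > 0"
  shows "\<exists>C>0. \<forall>t. 0 < t \<longrightarrow> t \<le> 1 \<longrightarrow>
           C * t powr (a * card I) \<le> prob {\<omega> \<in> space M. (\<Sum>i\<in>I. X i \<omega> * Y i \<omega>) < t}"
proof (intro exI[of _ "(B * B / card I powr a) ^ card I"] conjI allI impI)
  define n where "n = card I"
  have n: "n > 0"
    unfolding n_def using finite_index index_nonempty by (simp add: card_gt_0_iff)
  show "0 < (B * B / card I powr a) ^ card I"
    using B n by (simp add: n_def)
  fix t :: real
  assume t: "0 < t" "t \<le> 1"
  have "t powr (a * n) = (t powr a) ^ n"
    using t by (simp add: powr_power mult.commute)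
  then have "(B * B / n powr a) ^ n * t powr (a * n) = (\<Prod>i\<in>I. B * (t / n) powr a * B)"
    using t n by (simp add: n_def powr_divide power_mult_distrib[symmetric] mult_ac)
  also have "\<dots> \<le> (\<Prod>i\<in>I. prob {\<omega> \<in> space M. X i \<omega> \<in> {..<t / n}}
                      * prob {\<omega> \<in> space M. Y i \<omega> \<in> {..<1}})"
  proof (rule prod_mono)
    fix i
    assume "i \<in> I"
    moreover have "0 < t / n" "t / n \<le> 1"
      using t n by (auto simp: field_simps)
    ultimately show "0 \<le> B * (t / n) powr a * B \<and>
        B * (t / n) powr a * B \<le> prob {\<omega> \<in> space M. X i \<omega> \<in> {..<t / n}}
                                  * prob {\<omega> \<in> space M. Y i \<omega> \<in> {..<1}}"
      using XL YL B by (auto intro!: mult_mono)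
  qed
  also have "\<dots> = prob (\<Inter>i\<in>I. {\<omega> \<in> space M. X i \<omega> \<in> {..<t / n} \<and> Y i \<omega> \<in> {..<1}})"
    by (rule prob_rectangles[symmetric]) auto
  also have "\<dots> \<le> prob {\<omega> \<in> space M. (\<Sum>i\<in>I. X i \<omega> * Y i \<omega>) < t}"
    using small_rectangles_subset_sum_prod_less unfolding n_def
    by (rule finite_measure_mono[OF _ sets_sum_prod_less])
  finally show "(B * B / card I powr a) ^ card I * t powr (a * card I)
      \<le> prob {\<omega> \<in> space M. (\<Sum>i\<in>I. X i \<omega> * Y i \<omega>) < t}"
    by (simp add: n_def)
qed

lemma sum_prod_less_subset_dyadic_events:
  "{\<omega> \<in> space M. (\<Sum>i\<in>I. X i \<omega> * Y i \<omega>) < t}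
   \<subseteq> (\<Union>\<phi>\<in>PiE I (\<lambda>_. {0..Suc J}). \<Inter>i\<in>I. {\<omega> \<in> space M.
         X i \<omega> \<in> dyadic_x_cell t J (\<phi> i) \<and> Y i \<omega> \<in> dyadic_y_cell J (\<phi> i)})"
proof safe
  fix \<omega>
  assume \<omega>: "\<omega> \<in> space M" "(\<Sum>i\<in>I. X i \<omega> * Y i \<omega>) < t"
  have "\<forall>i\<in>I. \<exists>j\<in>{0..Suc J}. X i \<omega> \<in> dyadic_x_cell t J j \<and> Y i \<omega> \<in> dyadic_y_cell J j"
  proof
    fix i
    assume i: "i \<in> I"
    have "X i \<omega> * Y i \<omega> \<le> (\<Sum>i\<in>I. X i \<omega> * Y i \<omega>)"
      using i finite_index nonneg_X nonneg_Y \<omega>(1) by (intro member_le_sum) auto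
    then show "\<exists>j\<in>{0..Suc J}. X i \<omega> \<in> dyadic_x_cell t J j \<and> Y i \<omega> \<in> dyadic_y_cell J j"
      using \<omega> i nonneg_X nonneg_Y by (intro dyadic_cells_cover) auto
  qed
  then obtain \<phi> where "\<forall>i\<in>I. \<phi> i \<in> {0..Suc J}
      \<and> X i \<omega> \<in> dyadic_x_cell t J (\<phi> i) \<and> Y i \<omega> \<in> dyadic_y_cell J (\<phi> i)"
    by metis
  then show "\<omega> \<in> (\<Union>\<phi>\<in>PiE I (\<lambda>_. {0..Suc J}). \<Inter>i\<in>I. {\<omega> \<in> space M.
         X i \<omega> \<in> dyadic_x_cell t J (\<phi> i) \<and> Y i \<omega> \<in> dyadic_y_cell J (\<phi> i)})"
    using \<omega>(1) by (intro UN_I[of "restrict \<phi> I"]) auto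
qed

lemma prob_sum_prod_less_le_dyadic:
  "prob {\<omega> \<in> space M. (\<Sum>i\<in>I. X i \<omega> * Y i \<omega>) < t}
   \<le> (\<Prod>i\<in>I. \<Sum>j\<in>{0..Suc J}. prob {\<omega> \<in> space M. X i \<omega> \<in> dyadic_x_cell t J j}
                               * prob {\<omega> \<in> space M. Y i \<omega> \<in> dyadic_y_cell J j})"
proof -
  define E where "E \<phi> = (\<Inter>i\<in>I. {\<omega> \<in> space M. X i \<omega> \<in> dyadic_x_cell t J (\<phi> i)
                                          \<and> Y i \<omega> \<in> dyadic_y_cell J (\<phi> i)})" for \<phi>
  define \<Phi> where "\<Phi> = PiE I (\<lambda>_. {0..Suc J})"
  have cells_borel: "dyadic_x_cell t J j \<in> sets borel" "dyadic_y_cell J j \<in> sets borel" for j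
    unfolding dyadic_x_cell_def dyadic_y_cell_def by auto
  have finite_\<Phi>: "finite \<Phi>"
    unfolding \<Phi>_def using finite_index by (intro finite_PiE) auto
  have sets_rectangle: "{\<omega> \<in> space M. X i \<omega> \<in> U \<and> Y i \<omega> \<in> V} \<in> sets M"
    if "i \<in> I" "U \<in> sets borel" "V \<in> sets borel" for i U V
  proof -
    have "{\<omega> \<in> space M. X i \<omega> \<in> U \<and> Y i \<omega> \<in> V} = (X i -` U \<inter> space M) \<inter> (Y i -` V \<inter> space M)"
      by auto
    then show ?thesis
      using that measurable_X measurable_Y by (simp add: sets.Int measurable_sets)
  qed
  have sets_E: "E \<phi> \<in> sets M" for \<phi>
    unfolding E_def using index_nonempty finite_index cells_borel
    by (intro sets.finite_INT sets_rectangle) auto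
  have "prob {\<omega> \<in> space M. (\<Sum>i\<in>I. X i \<omega> * Y i \<omega>) < t} \<le> prob (\<Union>\<phi>\<in>\<Phi>. E \<phi>)"
    using sum_prod_less_subset_dyadic_events finite_\<Phi> sets_E unfolding E_def \<Phi>_def
    by (intro finite_measure_mono sets.finite_UN) auto
  also have "\<dots> \<le> (\<Sum>\<phi>\<in>\<Phi>. prob (E \<phi>))"
    using finite_\<Phi> sets_E by (intro finite_measure_subadditive_finite) auto
  also have "\<dots> = (\<Sum>\<phi>\<in>\<Phi>. \<Prod>i\<in>I. prob {\<omega> \<in> space M. X i \<omega> \<in> dyadic_x_cell t J (\<phi> i)}
                                * prob {\<omega> \<in> space M. Y i \<omega> \<in> dyadic_y_cell J (\<phi> i)})"
    unfolding E_def by (intro sum.cong refl prob_rectangles cells_borel)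
  also have "\<dots> = (\<Prod>i\<in>I. \<Sum>j\<in>{0..Suc J}. prob {\<omega> \<in> space M. X i \<omega> \<in> dyadic_x_cell t J j}
                                    * prob {\<omega> \<in> space M. Y i \<omega> \<in> dyadic_y_cell J j})"
    unfolding \<Phi>_def using finite_index by (intro prod_sum_PiE[symmetric]) auto
  finally show ?thesis .
qed

lemma small_ball_upper:
  assumes XU: "\<And>i s. i \<in> I \<Longrightarrow> s \<ge> 0 \<Longrightarrow> prob {\<omega> \<in> space M. X i \<omega> < s} \<le> A * s powr a"
    and YU: "\<And>i s. i \<in> I \<Longrightarrow> s \<ge> 0 \<Longrightarrow> prob {\<omega> \<in> space M. Y i \<omega> < s} \<le> A * s powr c"
    and a: "0 < a" "a < c" and A: "A > 0"
  shows "\<exists>C>0. \<forall>t. 0 < t \<longrightarrow> t \<le> 1 \<longrightarrow>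
           prob {\<omega> \<in> space M. (\<Sum>i\<in>I. X i \<omega> * Y i \<omega>) < t} \<le> C * t powr (a * card I)"
proof -
  define C where "C = 2 * A + A\<^sup>2 * 2 powr c / (1 - 2 powr (a - c))"
  have "(2::real) powr (a - c) < 2 powr 0"
    using a by (intro powr_less_mono) auto
  then have "C > 0"
    unfolding C_def using A by (auto intro!: add_pos_nonneg)
  have "prob {\<omega> \<in> space M. (\<Sum>i\<in>I. X i \<omega> * Y i \<omega>) < t} \<le> C ^ card I * t powr (a * card I)"
    if t: "0 < t" "t \<le> 1" for t
  proof -
    obtain J where J: "(1/2::real) ^ J < t"
      using real_arch_pow_inv[OF t(1), of "1/2"] by auto
    have "prob {\<omega> \<in> space M. (\<Sum>i\<in>I. X i \<omega> * Y i \<omega>) < t}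
        \<le> (\<Prod>i\<in>I. \<Sum>j\<in>{0..Suc J}. prob {\<omega> \<in> space M. X i \<omega> \<in> dyadic_x_cell t J j}
                                    * prob {\<omega> \<in> space M. Y i \<omega> \<in> dyadic_y_cell J j})"
      by (rule prob_sum_prod_less_le_dyadic)
    also have "\<dots> \<le> (\<Prod>i\<in>I. C * t powr a)"
      unfolding C_def using XU YU a A t J
      by (intro prod_mono conjI sum_nonneg mult_nonneg_nonneg measure_nonneg dyadic_cells_prob_sum_le)
        auto
    also have "\<dots> = C ^ card I * t powr (a * card I)"
      using t by (simp add: power_mult_distrib powr_power mult.commute)
    finally show ?thesis .
  qed
  then show ?thesis
    using \<open>C > 0\<close> by (intro exI[of _ "C ^ card I"]) auto
qed

lemma nakagami_small_ball_lower_sum: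
  assumes X: "\<And>i. i \<in> I \<Longrightarrow> distributed M lborel (X i) (\<lambda>x. ennreal (nakagami_pdf mX x))"
    and Y: "\<And>i. i \<in> I \<Longrightarrow> distributed M lborel (Y i) (\<lambda>x. ennreal (nakagami_pdf mY x))"
    and m: "mX \<ge> 1/2" "mY \<ge> 1/2"
  shows "\<exists>C>0. \<forall>t. 0 < t \<longrightarrow> t \<le> 1 \<longrightarrow>
           C * t powr (2 * mX * card I) \<le> prob {\<omega> \<in> space M. (\<Sum>i\<in>I. X i \<omega> * Y i \<omega>) < t}"
proof -
  define BX where "BX = 2 * mX powr mX / Gamma mX * exp (- mX) / 2 powr (2 * mX)"
  define BY where "BY = 2 * mY powr mY / Gamma mY * exp (- mY) / 2 powr (2 * mY)"
  have "BX > 0" "BY > 0"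
    unfolding BX_def BY_def using m Gamma_real_pos[of mX] Gamma_real_pos[of mY] by auto
  show ?thesis
  proof (rule small_ball_lower[where B = "min BX BY"])
    show "min BX BY * s powr (2 * mX) \<le> prob {\<omega> \<in> space M. X i \<omega> < s}"
      if "i \<in> I" "0 < s" "s \<le> 1" for i s
    proof -
      have "min BX BY * s powr (2 * mX) \<le> BX * s powr (2 * mX)"
        by (intro mult_right_mono) auto
      also have "\<dots> \<le> prob {\<omega> \<in> space M. X i \<omega> < s}"
        using nakagami_small_ball_lower[OF X m(1)] that unfolding BX_def by blast
      finally show ?thesis .
    qed
    show "min BX BY \<le> prob {\<omega> \<in> space M. Y i \<omega> < 1}" if "i \<in> I" for i
      using nakagami_small_ball_lower[OF Y, of i 1] that m unfolding BY_def by simp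
  qed (use \<open>BX > 0\<close> \<open>BY > 0\<close> in simp)
qed

lemma nakagami_small_ball_upper_sum:
  assumes X: "\<And>i. i \<in> I \<Longrightarrow> distributed M lborel (X i) (\<lambda>x. ennreal (nakagami_pdf mX x))"
    and Y: "\<And>i. i \<in> I \<Longrightarrow> distributed M lborel (Y i) (\<lambda>x. ennreal (nakagami_pdf mY x))"
    and m: "mX \<ge> 1/2" "mX < mY"
  shows "\<exists>C>0. \<forall>t. 0 < t \<longrightarrow> t \<le> 1 \<longrightarrow>
           prob {\<omega> \<in> space M. (\<Sum>i\<in>I. X i \<omega> * Y i \<omega>) < t} \<le> C * t powr (2 * mX * card I)"
proof -
  define AX where "AX = 2 * mX powr mX / Gamma mX"
  define AY where "AY = 2 * mY powr mY / Gamma mY"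
  have "AX > 0"
    unfolding AX_def using m Gamma_real_pos[of mX] by auto
  show ?thesis
  proof (rule small_ball_upper[where A = "max AX AY" and c = "2 * mY"])
    show "prob {\<omega> \<in> space M. X i \<omega> < s} \<le> max AX AY * s powr (2 * mX)"
      if "i \<in> I" "s \<ge> 0" for i s
    proof -
      have "prob {\<omega> \<in> space M. X i \<omega> < s} \<le> AX * s powr (2 * mX)"
        using nakagami_small_ball_upper[OF X m(1)] that unfolding AX_def by blast
      also have "\<dots> \<le> max AX AY * s powr (2 * mX)"
        by (intro mult_right_mono) auto
      finally show ?thesis .
    qed
    show "prob {\<omega> \<in> space M. Y i \<omega> < s} \<le> max AX AY * s powr (2 * mY)"
      if "i \<in> I" "s \<ge> 0" for i s
    proof -
      have "prob {\<omega> \<in> space M. Y i \<omega> < s} \<le> AY * s powr (2 * mY)"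
        using nakagami_small_ball_upper[OF Y, of i s] that m unfolding AY_def by simp
      also have "\<dots> \<le> max AX AY * s powr (2 * mY)"
        by (intro mult_right_mono) auto
      finally show ?thesis .
    qed
  qed (use m \<open>AX > 0\<close> in auto)
qed

lemma nakagami_small_ball_min:
  assumes X: "\<And>i. i \<in> I \<Longrightarrow> distributed M lborel (X i) (\<lambda>x. ennreal (nakagami_pdf mX x))"
    and Y: "\<And>i. i \<in> I \<Longrightarrow> distributed M lborel (Y i) (\<lambda>x. ennreal (nakagami_pdf mY x))"
    and m: "mX \<ge> 1/2" "mY \<ge> 1/2" "mX \<noteq> mY"
  shows "\<exists>C1>0. \<exists>C2>0. \<forall>t. 0 < t \<longrightarrow> t \<le> 1 \<longrightarrow>
           C1 * t powr (2 * min mX mY * card I) \<le> prob {\<omega> \<in> space M. (\<Sum>i\<in>I. X i \<omega> * Y i \<omega>) < t}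
         \<and> prob {\<omega> \<in> space M. (\<Sum>i\<in>I. X i \<omega> * Y i \<omega>) < t} \<le> C2 * t powr (2 * min mX mY * card I)"
proof (cases "mX < mY")
  case True
  then show ?thesis
    using nakagami_small_ball_lower_sum[OF X Y m(1,2)] nakagami_small_ball_upper_sum[OF X Y m(1) True]
    by (simp add: min_absorb1) blast
next
  case False
  with m(3) have "mY < mX"
    by simp
  interpret swapped: indep_pairs M Y X I
    by (rule swap)
  show ?thesis
    using swapped.nakagami_small_ball_lower_sum[OF Y X m(2,1)]
      swapped.nakagami_small_ball_upper_sum[OF Y X m(2) \<open>mY < mX\<close>] \<open>mY < mX\<close>
    by (simp add: mult.commute min_absorb2) blast
qed

end

lemma (in prob_space) indep_pairs_of_indep_vars_Plus:
  fixes X Y :: "'i \<Rightarrow> 'a \<Rightarrow> real"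
  assumes indep: "indep_vars (\<lambda>_. borel) (\<lambda>j. case j of Inl i \<Rightarrow> X i | Inr i \<Rightarrow> Y i) (I <+> I)"
    and I: "finite I" "I \<noteq> {}"
    and nonneg: "\<And>i \<omega>. i \<in> I \<Longrightarrow> \<omega> \<in> space M \<Longrightarrow> 0 \<le> X i \<omega>"
      "\<And>i \<omega>. i \<in> I \<Longrightarrow> \<omega> \<in> space M \<Longrightarrow> 0 \<le> Y i \<omega>"
  shows "indep_pairs M X Y I"
proof (intro indep_pairs.intro prob_space_axioms indep_pairs_axioms.intro I nonneg)
  define W where "W = (\<lambda>j. case j of Inl i \<Rightarrow> X i | Inr i \<Rightarrow> Y i)"
  have "W j \<in> borel_measurable M" if "j \<in> I <+> I" for j
    using indep that unfolding indep_vars_def2 W_def by auto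
  then show "X i \<in> borel_measurable M" "Y i \<in> borel_measurable M" if "i \<in> I" for i
    using that unfolding W_def by force+
  fix U V :: "'i \<Rightarrow> real set"
  assume borel: "\<And>i. U i \<in> sets borel" "\<And>i. V i \<in> sets borel"
  define A where "A = (\<lambda>j. case j of Inl i \<Rightarrow> U i | Inr i \<Rightarrow> V i)"
  have rectangles_eq: "(\<Inter>i\<in>I. {\<omega> \<in> space M. X i \<omega> \<in> U i \<and> Y i \<omega> \<in> V i}) = (\<Inter>j\<in>I <+> I. W j -` A j \<inter> space M)"
    using I unfolding W_def A_def by (auto; metis InlI InrI sum.case)
  have "prob (\<Inter>j\<in>I <+> I. W j -` A j \<inter> space M) = (\<Prod>j\<in>I <+> I. prob (W j -` A j \<inter> space M))"
    by (rule indep_varsD[OF indep[folded W_def]]) (use I borel in \<open>auto simp: A_def split: sum.split\<close>)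
  then have "prob (\<Inter>i\<in>I. {\<omega> \<in> space M. X i \<omega> \<in> U i \<and> Y i \<omega> \<in> V i})
      = (\<Prod>j\<in>I <+> I. prob (W j -` A j \<inter> space M))"
    unfolding rectangles_eq .
  also have "\<dots> = (\<Prod>i\<in>I. prob {\<omega> \<in> space M. X i \<omega> \<in> U i} * prob {\<omega> \<in> space M. Y i \<omega> \<in> V i})"
    using I by (simp add: prod.Plus prod.distrib W_def A_def vimage_def Int_def conj_commute)
  finally show "prob (\<Inter>i\<in>I. {\<omega> \<in> space M. X i \<omega> \<in> U i \<and> Y i \<omega> \<in> V i})
      = (\<Prod>i\<in>I. prob {\<omega> \<in> space M. X i \<omega> \<in> U i} * prob {\<omega> \<in> space M. Y i \<omega> \<in> V i})" .
qed

section \<open>Diversity order from a small-ball exponent\<close>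

lemma tendsto_neg_ln_div_ln_of_powr_bounds:
  fixes p :: "real \<Rightarrow> real"
  assumes L: "La > 0" "Lb > 0"
    and bounds: "eventually (\<lambda>\<rho>. La * \<rho> powr (- e) \<le> p \<rho> \<and> p \<rho> \<le> Lb * \<rho> powr (- e)) at_top"
  shows "((\<lambda>\<rho>. - ln (p \<rho>) / ln \<rho>) \<longlongrightarrow> e) at_top"
proof (rule tendsto_sandwich)
  have "((\<lambda>\<rho>. e - C / ln \<rho>) \<longlongrightarrow> e - 0) at_top" for C :: real
    by (intro tendsto_intros tendsto_divide_0[OF tendsto_const]
        filterlim_at_top_imp_at_infinity ln_at_top)
  then show "((\<lambda>\<rho>. e - ln Lb / ln \<rho>) \<longlongrightarrow> e) at_top" "((\<lambda>\<rho>. e - ln La / ln \<rho>) \<longlongrightarrow> e) at_top"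
    by simp_all
  have "eventually (\<lambda>\<rho>. e - ln Lb / ln \<rho> \<le> - ln (p \<rho>) / ln \<rho> \<and> - ln (p \<rho>) / ln \<rho> \<le> e - ln La / ln \<rho>) at_top"
    using bounds eventually_gt_at_top[of 1]
  proof eventually_elim
    case (elim \<rho>)
    then have "0 < ln \<rho>" and lower_pos: "0 < La * \<rho> powr (- e)"
      using L by auto
    have "ln La - e * ln \<rho> = ln (La * \<rho> powr (- e))"
      using L elim by (simp add: ln_mult ln_powr)
    also have "\<dots> \<le> ln (p \<rho>)"
      using elim lower_pos by (subst ln_le_cancel_iff) auto
    finally have "ln La - e * ln \<rho> \<le> ln (p \<rho>)" .
    moreover have "ln (p \<rho>) \<le> ln (Lb * \<rho> powr (- e))"
      using elim lower_pos by (subst ln_le_cancel_iff) auto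
    then have "ln (p \<rho>) \<le> ln Lb - e * ln \<rho>"
      using L elim by (simp add: ln_mult ln_powr)
    ultimately have "(e * ln \<rho> - ln Lb) / ln \<rho> \<le> - ln (p \<rho>) / ln \<rho>"
      "- ln (p \<rho>) / ln \<rho> \<le> (e * ln \<rho> - ln La) / ln \<rho>"
      using \<open>0 < ln \<rho>\<close> by (intro divide_right_mono; linarith)+
    then show ?case
      using \<open>0 < ln \<rho>\<close> by (simp add: diff_divide_distrib)
  qed
  then show "eventually (\<lambda>\<rho>. e - ln Lb / ln \<rho> \<le> - ln (p \<rho>) / ln \<rho>) at_top"
    "eventually (\<lambda>\<rho>. - ln (p \<rho>) / ln \<rho> \<le> e - ln La / ln \<rho>) at_top"
    by (auto elim: eventually_mono)
qed

lemma (in prob_space) small_ball_at_scaled_square: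
  fixes S :: "'a \<Rightarrow> real"
  assumes S_nonneg: "\<And>\<omega>. \<omega> \<in> space M \<Longrightarrow> 0 \<le> S \<omega>"
    and small_ball: "\<And>t. 0 < t \<Longrightarrow> t \<le> 1 \<Longrightarrow>
      C1 * t powr (2 * e) \<le> prob {\<omega> \<in> space M. S \<omega> < t}
      \<and> prob {\<omega> \<in> space M. S \<omega> < t} \<le> C2 * t powr (2 * e)"
    and x: "0 < x" "x \<le> \<rho>"
  shows "C1 * x powr e * \<rho> powr (- e) \<le> prob {\<omega> \<in> space M. \<rho> * (S \<omega>)\<^sup>2 < x}
      \<and> prob {\<omega> \<in> space M. \<rho> * (S \<omega>)\<^sup>2 < x} \<le> C2 * x powr e * \<rho> powr (- e)"
proof -
  have "\<rho> * s\<^sup>2 < x \<longleftrightarrow> s < sqrt (x / \<rho>)" if "s \<ge> 0" for s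
  proof -
    have "\<rho> * s\<^sup>2 < x \<longleftrightarrow> sqrt (s\<^sup>2) < sqrt (x / \<rho>)"
      using x by (simp only: real_sqrt_less_iff) (simp add: pos_less_divide_eq mult.commute)
    then show ?thesis
      using \<open>s \<ge> 0\<close> by simp
  qed
  then have threshold: "{\<omega> \<in> space M. \<rho> * (S \<omega>)\<^sup>2 < x} = {\<omega> \<in> space M. S \<omega> < sqrt (x / \<rho>)}"
    using S_nonneg by blast
  have scaling: "sqrt (x / \<rho>) powr (2 * e) = x powr e * \<rho> powr (- e)"
    using x by (simp add: powr_half_sqrt[symmetric] powr_powr powr_divide powr_minus_divide)
  show ?thesis
    using small_ball[of "sqrt (x / \<rho>)"] x unfolding threshold by (simp add: scaling mult.assoc)
qed

lemma (in prob_space) diversity_order_of_small_ball: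
  fixes S :: "'a \<Rightarrow> real" and E :: "real \<Rightarrow> 'a set"
  assumes S: "S \<in> borel_measurable M" and S_nonneg: "\<And>\<omega>. \<omega> \<in> space M \<Longrightarrow> 0 \<le> S \<omega>"
    and C: "C1 > 0" "C2 > 0"
    and small_ball: "\<And>t. 0 < t \<Longrightarrow> t \<le> 1 \<Longrightarrow>
      C1 * t powr (2 * e) \<le> prob {\<omega> \<in> space M. S \<omega> < t}
      \<and> prob {\<omega> \<in> space M. S \<omega> < t} \<le> C2 * t powr (2 * e)"
    and a: "0 < a" "a \<le> a'"
    and E: "\<And>\<rho>. E \<rho> \<in> events"
    and E_lower: "\<And>\<rho>. \<rho> > 0 \<Longrightarrow> {\<omega> \<in> space M. \<rho> * (S \<omega>)\<^sup>2 < a} \<subseteq> E \<rho>"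
    and E_upper: "\<And>\<rho>. \<rho> > 0 \<Longrightarrow> E \<rho> \<subseteq> {\<omega> \<in> space M. \<rho> * (S \<omega>)\<^sup>2 < a'}"
  shows "((\<lambda>\<rho>. - ln (prob (E \<rho>)) / ln \<rho>) \<longlongrightarrow> e) at_top"
proof (rule tendsto_neg_ln_div_ln_of_powr_bounds)
  show "C1 * a powr e > 0" "C2 * a' powr e > 0"
    using C a by auto
  note small_ball_at = small_ball_at_scaled_square[OF S_nonneg small_ball]
  show "eventually (\<lambda>\<rho>. C1 * a powr e * \<rho> powr (- e) \<le> prob (E \<rho>)
                       \<and> prob (E \<rho>) \<le> C2 * a' powr e * \<rho> powr (- e)) at_top"
    using eventually_ge_at_top[of a']
  proof eventually_elim
    case (elim \<rho>)
    then have "\<rho> > 0" "a \<le> \<rho>"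
      using a by auto
    have "C1 * a powr e * \<rho> powr (- e) \<le> prob {\<omega> \<in> space M. \<rho> * (S \<omega>)\<^sup>2 < a}"
      using small_ball_at[of a \<rho>] a \<open>a \<le> \<rho>\<close> by simp
    also have "\<dots> \<le> prob (E \<rho>)"
      using E_lower[OF \<open>\<rho> > 0\<close>] E by (rule finite_measure_mono)
    finally have lower: "C1 * a powr e * \<rho> powr (- e) \<le> prob (E \<rho>)" .
    have "prob (E \<rho>) \<le> prob {\<omega> \<in> space M. \<rho> * (S \<omega>)\<^sup>2 < a'}"
      using E_upper[OF \<open>\<rho> > 0\<close>] S by (intro finite_measure_mono) measurable
    also have "\<dots> \<le> C2 * a' powr e * \<rho> powr (- e)"
      using small_ball_at[of a' \<rho>] a elim by simp
    finally show ?case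
      using lower by simp
  qed
qed

section \<open>Quantised phase shifts\<close>

lemma borel_measurable_Arg [measurable]: "Arg \<in> borel_measurable borel"
proof -
  \<comment> \<open>Arg is continuous off the nonpositive reals, where it only takes the values 0 and pi.\<close>
  define A :: "complex set" where "A = - \<real>\<^sub>\<le>\<^sub>0"
  have Arg_eq: "Arg = (\<lambda>z. if z \<in> A then Arg z else if z = 0 then 0 else pi)"
  proof
    fix z :: complex
    show "Arg z = (if z \<in> A then Arg z else if z = 0 then 0 else pi)"
      using complex_eq_iff[of z 0]
      by (auto simp: A_def complex_nonpos_Reals_iff Arg_zero Arg_eq_pi)
  qed
  have "open A"
    unfolding A_def by auto
  then have "{z \<in> space borel. z \<in> A} \<in> sets borel"
    by (simp add: borel_open)
  moreover have "Arg \<in> borel_measurable (restrict_space borel {z. z \<in> A})"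
    using borel_measurable_continuous_on_restrict[OF continuous_on_Arg]
    by (simp add: A_def Compl_eq)
  moreover have "(\<lambda>z::complex. if z = 0 then 0 else pi)
      \<in> borel_measurable (restrict_space borel {z. z \<notin> A})"
    by (intro measurable_restrict_space1) measurable
  ultimately show ?thesis
    by (subst Arg_eq) (simp add: measurable_If_restrict_space_iff)
qed

lemma borel_measurable_cis [measurable]: "cis \<in> borel_measurable borel"
  by (intro borel_measurable_continuous_onI continuous_intros)

lemma Y_disc_measurable [measurable]:
  assumes "\<And>k. k \<in> {1..K} \<Longrightarrow> G n k \<in> borel_measurable M"
    and "\<And>k. k \<in> {1..K} \<Longrightarrow> g n k \<in> borel_measurable M"
  shows "Y_disc \<beta> K b th G g n \<in> borel_measurable M"
  unfolding Y_disc_def[abs_def] phase_err_def theta_hat_def theta_bar_def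
  using assms by measurable

lemma Y_cont_measurable [measurable]:
  assumes "\<And>k. k \<in> {1..K} \<Longrightarrow> G n k \<in> borel_measurable M"
    and "\<And>k. k \<in> {1..K} \<Longrightarrow> g n k \<in> borel_measurable M"
  shows "Y_cont \<beta> K G g n \<in> borel_measurable M"
  unfolding Y_cont_def[abs_def] using assms by measurable

lemma abs_phase_err_le:
  assumes "b \<ge> 2"
  shows "\<bar>phase_err b th G g n k \<omega>\<bar> \<le> pi / 4"
proof -
  define y where "y = theta_bar th G g n k \<omega> / qstep b"
  have q: "qstep b > 0"
    unfolding qstep_def by simp
  have "theta_bar th G g n k \<omega> = qstep b * y"
    unfolding y_def using q by simp
  then have "phase_err b th G g n k \<omega> = qstep b * (of_int \<lfloor>y\<rfloor> + 1/2 - y)"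
    unfolding phase_err_def theta_hat_def y_def[symmetric] by (simp add: algebra_simps)
  then have "\<bar>phase_err b th G g n k \<omega>\<bar> = qstep b * \<bar>of_int \<lfloor>y\<rfloor> + 1/2 - y\<bar>"
    using q by (simp add: abs_mult)
  also have "\<dots> \<le> qstep b * (1/2)"
    using q by (intro mult_left_mono) linarith+
  also have "\<dots> \<le> pi / 4"
  proof -
    have "(4::real) \<le> 2 ^ b"
      using power_increasing[OF assms, of "2::real"] by simp
    then have "2 * pi / 2 ^ b \<le> 2 * pi / 4"
      by (intro divide_left_mono) auto
    then show ?thesis
      unfolding qstep_def by (simp add: mult.commute)
  qed
  finally show ?thesis .
qed

lemma cos_mult_sum_le_norm_sum_cis:
  fixes w e :: "'i \<Rightarrow> real"
  assumes w: "\<And>k. k \<in> A \<Longrightarrow> 0 \<le> w k" and e: "\<And>k. k \<in> A \<Longrightarrow> \<bar>e k\<bar> \<le> \<delta>" and "\<delta> \<le> pi"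
  shows "cos \<delta> * (\<Sum>k\<in>A. w k) \<le> cmod (\<Sum>k\<in>A. complex_of_real (w k) * cis (e k))"
proof -
  have "cos \<delta> * (\<Sum>k\<in>A. w k) \<le> (\<Sum>k\<in>A. w k * cos (e k))"
    unfolding sum_distrib_left
  proof (rule sum_mono)
    fix k
    assume k: "k \<in> A"
    have "cos \<delta> \<le> cos \<bar>e k\<bar>"
      using e[OF k] \<open>\<delta> \<le> pi\<close> by (intro cos_monotone_0_pi_le) auto
    then have "cos \<delta> * w k \<le> cos (e k) * w k"
      using w[OF k] by (intro mult_right_mono) auto
    then show "cos \<delta> * w k \<le> w k * cos (e k)"
      by (simp add: mult.commute)
  qed
  also have "\<dots> = Re (\<Sum>k\<in>A. complex_of_real (w k) * cis (e k))"
    by simp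
  also have "\<dots> \<le> cmod (\<Sum>k\<in>A. complex_of_real (w k) * cis (e k))"
    by (rule complex_Re_le_cmod)
  finally show ?thesis .
qed

lemma Y_disc_le_Y_cont:
  assumes "\<beta> \<ge> 0"
  shows "Y_disc \<beta> K b th G g n \<omega> \<le> Y_cont \<beta> K G g n \<omega>"
proof -
  have "cmod (\<Sum>k\<in>{1..K}. complex_of_real (cmod (G n k \<omega>) * cmod (g n k \<omega>)) * cis (phase_err b th G g n k \<omega>))
      \<le> (\<Sum>k\<in>{1..K}. cmod (G n k \<omega>) * cmod (g n k \<omega>))"
    by (rule order.trans[OF norm_sum]) (simp add: norm_mult)
  then show ?thesis
    unfolding Y_disc_def Y_cont_def using assms by (rule mult_left_mono)
qed

lemma Y_cont_le_sqrt2_Y_disc: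
  assumes "b \<ge> 2" "\<beta> \<ge> 0"
  shows "Y_cont \<beta> K G g n \<omega> \<le> sqrt 2 * Y_disc \<beta> K b th G g n \<omega>"
proof -
  define s where "s = (\<Sum>k\<in>{1..K}. cmod (G n k \<omega>) * cmod (g n k \<omega>))"
  define u where "u = cmod (\<Sum>k\<in>{1..K}. complex_of_real (cmod (G n k \<omega>) * cmod (g n k \<omega>))
                                        * cis (phase_err b th G g n k \<omega>))"
  have "cos (pi / 4) * s \<le> u"
    unfolding s_def u_def
    using abs_phase_err_le[OF assms(1)] by (intro cos_mult_sum_le_norm_sum_cis) auto
  then have "sqrt 2 / 2 * s \<le> u"
    by (simp add: cos_45)
  then have "sqrt 2 * (sqrt 2 / 2 * s) \<le> sqrt 2 * u"
    by (rule mult_left_mono) simp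
  moreover have "sqrt 2 * (sqrt 2 / 2 * s) = s"
    by simp
  ultimately have "s \<le> sqrt 2 * u"
    by (simp only:)
  then have "\<beta> * s \<le> \<beta> * (sqrt 2 * u)"
    using assms(2) by (rule mult_left_mono)
  then show ?thesis
    unfolding Y_cont_def Y_disc_def s_def u_def by (simp only: mult.left_commute)
qed

section \<open>The OMA diversity order\<close>

lemma channels_measurable:
  fixes G g :: "nat \<Rightarrow> nat \<Rightarrow> 'a \<Rightarrow> complex" and N K i k :: nat
  assumes "prob_space M"
    and indep: "prob_space.indep_vars M (\<lambda>_. borel)
           (\<lambda>x. case x of Inl (i, k) \<Rightarrow> G i k | Inr (i, k) \<Rightarrow> g i k)
           (({1..N} \<times> {1..K}) <+> ({1..N} \<times> {1..K}))"
    and "i \<in> {1..N}" "k \<in> {1..K}"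
  shows "G i k \<in> borel_measurable M" "g i k \<in> borel_measurable M"
proof -
  have "Inl (i, k) \<in> ({1..N} \<times> {1..K}) <+> ({1..N} \<times> {1..K})"
    "Inr (i, k) \<in> ({1..N} \<times> {1..K}) <+> ({1..N} \<times> {1..K})"
    using assms(3,4) by auto
  then show "G i k \<in> borel_measurable M" "g i k \<in> borel_measurable M"
    using indep unfolding prob_space.indep_vars_def2[OF assms(1)] by force+
qed

lemma indep_pairs_channel_gains:
  fixes G g :: "nat \<Rightarrow> nat \<Rightarrow> 'a \<Rightarrow> complex" and N K n :: nat
  assumes "prob_space M"
    and indep: "prob_space.indep_vars M (\<lambda>_. borel)
           (\<lambda>x. case x of Inl (i, k) \<Rightarrow> G i k | Inr (i, k) \<Rightarrow> g i k)
           (({1..N} \<times> {1..K}) <+> ({1..N} \<times> {1..K}))"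
    and "n \<in> {1..N}" "K \<ge> 1"
  shows "indep_pairs M (\<lambda>(i, k) \<omega>. cmod (G i k \<omega>)) (\<lambda>(i, k) \<omega>. cmod (g i k \<omega>)) ({n} \<times> {1..K})"
proof -
  interpret prob_space M
    by fact
  have "indep_vars (\<lambda>_. borel)
      (\<lambda>j \<omega>. cmod ((case j of Inl (i, k) \<Rightarrow> G i k | Inr (i, k) \<Rightarrow> g i k) \<omega>))
      (({n} \<times> {1..K}) <+> ({n} \<times> {1..K}))"
    by (rule indep_vars_subset[OF indep_vars_compose2[OF indep]]) (use assms(3) in auto)
  moreover have "(\<lambda>j \<omega>. cmod ((case j of Inl (i, k) \<Rightarrow> G i k | Inr (i, k) \<Rightarrow> g i k) \<omega>))
      = (\<lambda>j. case j of Inl p \<Rightarrow> (\<lambda>(i, k) \<omega>. cmod (G i k \<omega>)) p | Inr p \<Rightarrow> (\<lambda>(i, k) \<omega>. cmod (g i k \<omega>)) p)"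
    by (auto split: sum.split)
  ultimately show ?thesis
    using assms(4) by (intro indep_pairs_of_indep_vars_Plus) auto
qed

lemma channel_gain_sum_small_ball:
  fixes G g :: "nat \<Rightarrow> nat \<Rightarrow> 'a \<Rightarrow> complex" and N K n :: nat
  assumes P: "prob_space M"
    and indep: "prob_space.indep_vars M (\<lambda>_. borel)
           (\<lambda>x. case x of Inl (i, k) \<Rightarrow> G i k | Inr (i, k) \<Rightarrow> g i k)
           (({1..N} \<times> {1..K}) <+> ({1..N} \<times> {1..K}))"
    and G: "\<And>i k. i \<in> {1..N} \<Longrightarrow> k \<in> {1..K} \<Longrightarrow>
           distributed M lborel (\<lambda>\<omega>. cmod (G i k \<omega>)) (\<lambda>x. ennreal (nakagami_pdf mG x))"
    and g: "\<And>i k. i \<in> {1..N} \<Longrightarrow> k \<in> {1..K} \<Longrightarrow>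
           distributed M lborel (\<lambda>\<omega>. cmod (g i k \<omega>)) (\<lambda>x. ennreal (nakagami_pdf mg x))"
    and n: "n \<in> {1..N}" and K: "K \<ge> 1" and m: "mG \<ge> 1/2" "mg \<ge> 1/2" "mG \<noteq> mg"
  shows "\<exists>C1>0. \<exists>C2>0. \<forall>t. 0 < t \<longrightarrow> t \<le> 1 \<longrightarrow>
      C1 * t powr (2 * (min mG mg * K))
        \<le> measure M {\<omega> \<in> space M. (\<Sum>k\<in>{1..K}. cmod (G n k \<omega>) * cmod (g n k \<omega>)) < t}
      \<and> measure M {\<omega> \<in> space M. (\<Sum>k\<in>{1..K}. cmod (G n k \<omega>) * cmod (g n k \<omega>)) < t}
        \<le> C2 * t powr (2 * (min mG mg * K))"
proof -
  interpret gains: indep_pairs M "\<lambda>(i, k) \<omega>. cmod (G i k \<omega>)" "\<lambda>(i, k) \<omega>. cmod (g i k \<omega>)" "{n} \<times> {1..K}"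
    using P indep n K by (rule indep_pairs_channel_gains)
  show ?thesis
    using gains.nakagami_small_ball_min[of mG mg] G g n m
    by (auto simp: sum.cartesian_product' mult.assoc)
qed

lemma Y_disc_outage_between_Y_cont:
  assumes "b \<ge> 2" "\<beta> > 0" "\<rho> > 0"
  shows "\<rho> * (Y_cont \<beta> K G g n \<omega>)\<^sup>2 < x \<Longrightarrow> \<rho> * (Y_disc \<beta> K b th G g n \<omega>)\<^sup>2 < x"
    and "\<rho> * (Y_disc \<beta> K b th G g n \<omega>)\<^sup>2 < x \<Longrightarrow> \<rho> * (Y_cont \<beta> K G g n \<omega>)\<^sup>2 < 2 * x"
proof -
  have "0 \<le> Y_disc \<beta> K b th G g n \<omega>"
    using assms(2) by (simp add: Y_disc_def)
  then have "(Y_disc \<beta> K b th G g n \<omega>)\<^sup>2 \<le> (Y_cont \<beta> K G g n \<omega>)\<^sup>2"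
    using Y_disc_le_Y_cont[of \<beta> K b th G g n \<omega>] assms(2) by (intro power_mono) auto
  then show "\<rho> * (Y_cont \<beta> K G g n \<omega>)\<^sup>2 < x \<Longrightarrow> \<rho> * (Y_disc \<beta> K b th G g n \<omega>)\<^sup>2 < x"
    using assms(3) mult_left_mono[of _ _ \<rho>] by (meson less_imp_le le_less_trans)
  have "0 \<le> Y_cont \<beta> K G g n \<omega>"
    using assms(2) by (simp add: Y_cont_def sum_nonneg)
  then have "(Y_cont \<beta> K G g n \<omega>)\<^sup>2 \<le> (sqrt 2 * Y_disc \<beta> K b th G g n \<omega>)\<^sup>2"
    using Y_cont_le_sqrt2_Y_disc[OF assms(1), of \<beta> K G g n \<omega> th] assms(2) by (intro power_mono) auto
  then have "\<rho> * (Y_cont \<beta> K G g n \<omega>)\<^sup>2 \<le> 2 * (\<rho> * (Y_disc \<beta> K b th G g n \<omega>)\<^sup>2)"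
    using assms(3) mult_left_mono[of _ _ \<rho>] by (simp add: power_mult_distrib)
  then show "\<rho> * (Y_disc \<beta> K b th G g n \<omega>)\<^sup>2 < x \<Longrightarrow> \<rho> * (Y_cont \<beta> K G g n \<omega>)\<^sup>2 < 2 * x"
    by linarith
qed

theorem corollary2:
  fixes M :: "'a measure"
    and G g :: "nat \<Rightarrow> nat \<Rightarrow> 'a \<Rightarrow> complex"
    and th :: "nat \<Rightarrow> real"
    and N K b n :: nat
    and \<beta> mG mg R :: real
  assumes "prob_space M"
    and "N \<ge> 1" and "K \<ge> 1" and "b \<ge> 2"
    and "0 < \<beta>" and "\<beta> \<le> 1"
    and "mG \<ge> 1/2" and "mg \<ge> 1/2" and "mG \<noteq> mg"
    and "R > 0"
    and "\<And>i. i \<in> {1..N} \<Longrightarrow> 0 \<le> th i \<and> th i < 2 * pi"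
    and "prob_space.indep_vars M (\<lambda>_. borel)
           (\<lambda>x. case x of Inl (i, k) \<Rightarrow> G i k | Inr (i, k) \<Rightarrow> g i k)
           (({1..N} \<times> {1..K}) <+> ({1..N} \<times> {1..K}))"
    and "\<And>i k. i \<in> {1..N} \<Longrightarrow> k \<in> {1..K} \<Longrightarrow>
           distributed M lborel (\<lambda>\<omega>. cmod (G i k \<omega>)) (\<lambda>x. ennreal (nakagami_pdf mG x))"
    and "\<And>i k. i \<in> {1..N} \<Longrightarrow> k \<in> {1..K} \<Longrightarrow>
           distributed M lborel (\<lambda>\<omega>. cmod (g i k \<omega>)) (\<lambda>x. ennreal (nakagami_pdf mg x))"
    and "n \<in> {1..N}"
  shows "((\<lambda>\<rho>. - ln (measure M {\<omega> \<in> space M. \<rho> * (Y_disc \<beta> K b th G g n \<omega>)\<^sup>2 < gamma_OMA N R})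
                 / ln \<rho>) \<longlongrightarrow> min mG mg * real K) at_top
       \<and> ((\<lambda>\<rho>. - ln (measure M {\<omega> \<in> space M. \<rho> * (Y_cont \<beta> K G g n \<omega>)\<^sup>2 < gamma_OMA N R})
                 / ln \<rho>) \<longlongrightarrow> min mG mg * real K) at_top"
proof -
  note P = assms(1) and \<beta> = assms(5) and indep = assms(12) and n = assms(15)
  interpret prob_space M
    by (fact P)
  define S where "S \<omega> = (\<Sum>k\<in>{1..K}. cmod (G n k \<omega>) * cmod (g n k \<omega>))" for \<omega>
  obtain C1 C2 where C: "C1 > 0" "C2 > 0" and small_ball: "\<And>t. 0 < t \<Longrightarrow> t \<le> 1 \<Longrightarrow>
      C1 * t powr (2 * (min mG mg * K)) \<le> prob {\<omega> \<in> space M. S \<omega> < t}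
      \<and> prob {\<omega> \<in> space M. S \<omega> < t} \<le> C2 * t powr (2 * (min mG mg * K))"
    using channel_gain_sum_small_ball[OF P indep assms(13,14) n assms(3,7-9)] unfolding S_def by blast
  have measurable: "G n k \<in> borel_measurable M" "g n k \<in> borel_measurable M" if "k \<in> {1..K}" for k
    using channels_measurable[OF P indep n that] by auto
  then have S: "S \<in> borel_measurable M" "\<And>\<omega>. 0 \<le> S \<omega>"
    unfolding S_def by (measurable, simp add: sum_nonneg)
  have "gamma_OMA N R > 0"
    unfolding gamma_OMA_def using assms(2,10) by simp
  have S_outage: "\<rho> * (S \<omega>)\<^sup>2 < x \<longleftrightarrow> \<rho> * (Y_cont \<beta> K G g n \<omega>)\<^sup>2 < \<beta>\<^sup>2 * x" for \<rho> x \<omega>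
    using \<beta> by (simp add: Y_cont_def S_def power_mult_distrib mult.left_commute)
  show ?thesis
  proof
    show "((\<lambda>\<rho>. - ln (prob {\<omega> \<in> space M. \<rho> * (Y_disc \<beta> K b th G g n \<omega>)\<^sup>2 < gamma_OMA N R}) / ln \<rho>)
        \<longlongrightarrow> min mG mg * K) at_top"
      using Y_disc_outage_between_Y_cont[OF assms(4) \<beta>] measurable \<open>gamma_OMA N R > 0\<close> \<beta>
      by (intro diversity_order_of_small_ball[OF S C small_ball, where a = "gamma_OMA N R / \<beta>\<^sup>2"
          and a' = "2 * gamma_OMA N R / \<beta>\<^sup>2"]) (auto simp: S_outage intro: divide_right_mono)
    show "((\<lambda>\<rho>. - ln (prob {\<omega> \<in> space M. \<rho> * (Y_cont \<beta> K G g n \<omega>)\<^sup>2 < gamma_OMA N R}) / ln \<rho>)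
        \<longlongrightarrow> min mG mg * K) at_top"
      using measurable \<open>gamma_OMA N R > 0\<close> \<beta>
      by (intro diversity_order_of_small_ball[OF S C small_ball, where a = "gamma_OMA N R / \<beta>\<^sup>2"
          and a' = "gamma_OMA N R / \<beta>\<^sup>2"]) (auto simp: S_outage)
  qed
qed

end
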